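(* For all positive integers $m,n$ and any $(A,\boldsymbol{\gamma})\in[0,1)^{m\times n}\times[0,1)^m$, we have $\mathcal{C}(A,\boldsymbol{\gamma})\neq\emptyset$ if and only if $(A,\boldsymbol{\gamma})\notin\mathbf{Bad}(m,n)$.
   Context: $[0,1)^{m\times n}$ is the set of real $m\times n$ matrices with entries in $[0,1)$. For $\boldsymbol{x}\in\mathbb{R}^n$, $\|\boldsymbol{x}\|=\max_i|x_i|$; for $\boldsymbol{y}\in\mathbb{R}^m$, $\langle\boldsymbol{y}\rangle=\min_{\boldsymbol{p}\in\mathbb{Z}^m}\|\boldsymbol{y}-\boldsymbol{p}\|$. "Decreasing" means non-increasing. $\mathcal{C}$ is the set of decreasing $\psi:\mathbb{N}\to[0,\infty)$ with $\sum_{q\ge1}q^{n-1}\psi(q)^m<\infty$. $\mathcal{C}(A,\boldsymbol{\gamma})=\{\psi\in\mathcal{C}:\langle A\boldsymbol{q}-\boldsymbol{\gamma}\rangle<\psi(\|\boldsymbol{q}\|)\text{ for infinitely many }\boldsymbol{q}\in\mathbb{Z}^n\}$. $\mathbf{Bad}(m,n)=\{(A,\boldsymbol{\gamma}):\liminf_{\boldsymbol{q}\in\mathbb{Z}^n,\|\boldsymbol{q}\|\to\infty}\|\boldsymbol{q}\|^n\langle A\boldsymbol{q}-\boldsymbol{\gamma}\rangle^m>0\}$. *)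

theory Defs
  imports "HOL-Analysis.Analysis" "HOL-Library.Liminf_Limsup"
begin

definition supnorm_int :: "int ^ 'n::finite \<Rightarrow> nat" where
  "supnorm_int q = nat (Max (range (\<lambda>i. \<bar>q $ i\<bar>)))"

definition supnorm_real :: "real ^ 'm::finite \<Rightarrow> real" where
  "supnorm_real y = Max (range (\<lambda>i. \<bar>y $ i\<bar>))"

definition dist_Zm :: "real ^ 'm::finite \<Rightarrow> real" where
  "dist_Zm y = (INF p :: int ^ 'm. supnorm_real (y - (\<chi> i. real_of_int (p $ i))))"

definition matvec_int :: "real ^ 'n ^ 'm \<Rightarrow> int ^ 'n::finite \<Rightarrow> real ^ 'm::finite" where
  "matvec_int A q = A *v (\<chi> j. real_of_int (q $ j))"

definition C_class :: "nat \<Rightarrow> nat \<Rightarrow> (nat \<Rightarrow> real) set" where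
  "C_class m n = {\<psi>. (\<forall>a b. a \<le> b \<longrightarrow> \<psi> b \<le> \<psi> a) \<and> (\<forall>q. 0 \<le> \<psi> q) \<and>
      summable (\<lambda>k. real (Suc k) ^ (n - 1) * \<psi> (Suc k) ^ m)}"

definition C_A :: "real ^ 'n ^ 'm \<Rightarrow> real ^ 'm \<Rightarrow> (nat \<Rightarrow> real) set" where
  "C_A A \<gamma> = {\<psi> \<in> C_class CARD('m::finite) CARD('n::finite).
      infinite {q :: int ^ 'n. dist_Zm (matvec_int A q - \<gamma>) < \<psi> (supnorm_int q)}}"

definition Bad :: "((real ^ 'n::finite ^ 'm::finite) \<times> (real ^ 'm)) set" where
  "Bad = {(A :: real ^ 'n ^ 'm, \<gamma> :: real ^ 'm). Liminf (INF N::nat. principal {q :: int ^ 'n. N \<le> supnorm_int q})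
        (\<lambda>q. ereal (real (supnorm_int q) ^ CARD('n) * dist_Zm (matvec_int A q - \<gamma>) ^ CARD('m)))
        > 0}"

end

theory Submission
  imports Defs
begin

text \<open>
  The filter in the definition of Bad is the cofinite filter on integer vectors, so (A, gamma) is
  not in Bad iff for every e > 0 infinitely many q satisfy |q|^n <Aq - gamma>^m < e.

  If psi is in C(A, gamma), monotonicity and the convergence of the series of q^(n-1) psi(q)^m
  force t^n psi(t)^m to tend to 0, so along the infinitely many q with <Aq - gamma> < psi(|q|)
  the quantity |q|^n <Aq - gamma>^m becomes arbitrarily small.

  Conversely, choose q_k with strictly increasing norms N_k and |q_k|^n <A q_k - gamma>^m < 2^-k,
  and let psi be the decreasing step function with psi(t)^m = 2^-k / N_k^n on the block
  N_(k-1) < t \<le> N_k. That block contributes at most N_k N_k^(n-1) psi(N_k)^m = 2^-k to the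
  series, so psi is in C, and psi(|q_k|) > <A q_k - gamma> for every k.
\<close>

lemma supnorm_real_nonneg: "0 \<le> supnorm_real y"
proof -
  have "\<bar>y $ undefined\<bar> \<le> supnorm_real y"
    unfolding supnorm_real_def by (rule Max_ge) auto
  then show ?thesis by linarith
qed

lemma dist_Zm_nonneg: "0 \<le> dist_Zm y"
  unfolding dist_Zm_def by (rule cINF_greatest) (auto simp: supnorm_real_nonneg)

lemma abs_le_supnorm_int: "\<bar>q $ i\<bar> \<le> int (supnorm_int q)"
proof -
  have "\<bar>q $ i\<bar> \<le> Max (range (\<lambda>i. \<bar>q $ i\<bar>))" by (rule Max_ge) auto
  then show ?thesis unfolding supnorm_int_def by linarith
qed

lemma finite_supnorm_int_le: "finite {q :: int ^ 'n::finite. supnorm_int q \<le> N}"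
proof -
  let ?box = "PiE (UNIV :: 'n set) (\<lambda>_. {- int N..int N})"
  have "{q :: int ^ 'n. supnorm_int q \<le> N} \<subseteq> vec_lambda ` ?box"
  proof
    fix q :: "int ^ 'n" assume "q \<in> {q. supnorm_int q \<le> N}"
    then have "- int N \<le> q $ i \<and> q $ i \<le> int N" for i
      using abs_le_supnorm_int[of q i] by (simp add: abs_le_iff)
    then have "vec_nth q \<in> ?box" by auto
    then show "q \<in> vec_lambda ` ?box" by (metis image_eqI vec_nth_inverse)
  qed
  moreover have "finite ?box" by (rule finite_PiE) auto
  ultimately show ?thesis by (meson finite_imageI finite_subset)
qed

lemma INF_principal_supnorm_int_eq_cofinite:
  "(INF N::nat. principal {q :: int ^ 'n::finite. N \<le> supnorm_int q}) = cofinite"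
proof (rule filter_eq_iff[THEN iffD2], intro allI)
  fix P :: "int ^ 'n \<Rightarrow> bool"
  have "eventually P (INF N::nat. principal {q. N \<le> supnorm_int q}) \<longleftrightarrow>
      (\<exists>N. \<forall>q. N \<le> supnorm_int q \<longrightarrow> P q)"
    by (subst eventually_INF_base)
      (auto simp: eventually_principal inf_principal intro: exI[of _ "max _ _"])
  also have "\<dots> \<longleftrightarrow> finite {q. \<not> P q}"
  proof
    assume "\<exists>N. \<forall>q. N \<le> supnorm_int q \<longrightarrow> P q"
    then obtain N where "\<forall>q. N \<le> supnorm_int q \<longrightarrow> P q" ..
    then have "{q. \<not> P q} \<subseteq> {q. supnorm_int q \<le> N}" using nat_le_linear by blast
    then show "finite {q. \<not> P q}" using finite_supnorm_int_le finite_subset by blast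
  next
    assume "finite {q. \<not> P q}"
    then have "\<forall>q. Suc (Max (supnorm_int ` {q. \<not> P q})) \<le> supnorm_int q \<longrightarrow> P q"
      by (meson Max_ge finite_imageI image_eqI mem_Collect_eq not_less_eq_eq)
    then show "\<exists>N. \<forall>q. N \<le> supnorm_int q \<longrightarrow> P q" ..
  qed
  finally show "eventually P (INF N::nat. principal {q. N \<le> supnorm_int q}) \<longleftrightarrow> eventually P cofinite"
    by (simp add: eventually_cofinite)
qed

lemma Liminf_ereal_pos_iff:
  "0 < Liminf F (\<lambda>x. ereal (f x)) \<longleftrightarrow> (\<exists>e>0. eventually (\<lambda>x. e \<le> f x) F)"
proof
  assume "0 < Liminf F (\<lambda>x. ereal (f x))"
  then obtain e where "0 < ereal e" "ereal e < Liminf F (\<lambda>x. ereal (f x))"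
    using ereal_dense2 by blast
  moreover have "eventually (\<lambda>x. ereal e < ereal (f x)) F"
    using le_Liminf_iff[of "Liminf F (\<lambda>x. ereal (f x))" F "\<lambda>x. ereal (f x)"] \<open>ereal e < _\<close>
    by blast
  ultimately have "e > 0" "eventually (\<lambda>x. e < f x) F" by auto
  then show "\<exists>e>0. eventually (\<lambda>x. e \<le> f x) F"
    by (auto elim!: eventually_mono)
next
  assume "\<exists>e>0. eventually (\<lambda>x. e \<le> f x) F"
  then obtain e where "e > 0" "eventually (\<lambda>x. ereal e \<le> ereal (f x)) F" by auto
  then have "ereal e \<le> Liminf F (\<lambda>x. ereal (f x))" by (intro Liminf_bounded) auto
  then show "0 < Liminf F (\<lambda>x. ereal (f x))" using \<open>e > 0\<close>
    by (metis ereal_less(2) order_less_le_trans)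
qed

lemma Bad_iff_finite:
  fixes A :: "real ^ 'n::finite ^ 'm::finite" and \<gamma> :: "real ^ 'm"
  shows "(A, \<gamma>) \<in> Bad \<longleftrightarrow> (\<exists>e>0. finite {q :: int ^ 'n.
      real (supnorm_int q) ^ CARD('n) * dist_Zm (matvec_int A q - \<gamma>) ^ CARD('m) < e})"
  unfolding Bad_def INF_principal_supnorm_int_eq_cofinite
  by (simp add: Liminf_ereal_pos_iff eventually_cofinite not_le)

lemma summable_antimono_imp_power_mult_tendsto_zero:
  fixes b :: "nat \<Rightarrow> real"
  assumes b: "antimono b" "\<And>k. 0 \<le> b k"
    and sum: "summable (\<lambda>k. real (Suc k) ^ (n - 1) * b (Suc k))" and n: "n \<ge> 1"
  shows "(\<lambda>t. real t ^ n * b t) \<longlonglongrightarrow> 0"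
proof (rule LIMSEQ_I)
  fix e :: real assume "e > 0"
  define a where "a k = real (Suc k) ^ (n - 1) * b (Suc k)" for k
  obtain N where N: "\<And>s r. s \<ge> N \<Longrightarrow> norm (sum a {s..<r}) < e / 3 ^ n"
    using sum \<open>e > 0\<close> unfolding summable_Cauchy a_def
    by (metis divide_pos_pos zero_less_numeral zero_less_power)
  have "real t ^ n * b t < e" if t: "2 * N + 2 \<le> t" for t
  proof -
    define s where "s = t div 2"
    have s: "1 \<le> s" "N \<le> s" "2 * s \<le> t" "t \<le> 3 * s" using t unfolding s_def by auto
    \<comment> \<open>The Cauchy block a_s + ... + a_(2s-1) dominates s^n b_t, since b decreases.\<close>
    have "real s ^ n * b t = (\<Sum>i\<in>{s..<2 * s}. real s ^ (n - 1) * b t)"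
      using n by (simp add: power_eq_if mult.assoc)
    also have "\<dots> \<le> sum a {s..<2 * s}"
      unfolding a_def using s b
      by (intro sum_mono mult_mono power_mono) (auto simp: antimono_def)
    also have "\<dots> < e / 3 ^ n" using N[OF s(2), of "2 * s"] by simp
    finally have "real s ^ n * b t < e / 3 ^ n" .
    moreover have "real t ^ n * b t \<le> (3 * real s) ^ n * b t"
      using s b(2)[of t] by (intro mult_right_mono power_mono) auto
    ultimately show ?thesis by (simp add: power_mult_distrib field_simps)
  qed
  then show "\<exists>T. \<forall>t\<ge>T. norm (real t ^ n * b t - 0) < e"
    using b(2) by (intro exI[of _ "2 * N + 2"]) auto
qed

definition block_index :: "(nat \<Rightarrow> nat) \<Rightarrow> nat \<Rightarrow> nat" where
  "block_index N t = (LEAST k. t \<le> N k)"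

lemma block_index_le_iff:
  assumes "strict_mono N"
  shows "block_index N t \<le> k \<longleftrightarrow> t \<le> N k"
proof
  have "t \<le> N (block_index N t)"
    unfolding block_index_def using strict_mono_imp_increasing[OF assms] by (rule LeastI)
  then show "block_index N t \<le> k \<Longrightarrow> t \<le> N k"
    using assms by (meson order_trans strict_mono_less_eq)
qed (simp add: block_index_def Least_le)

lemma block_index_N:
  assumes "strict_mono N"
  shows "block_index N (N k) = k"
  using block_index_le_iff[OF assms] assms by (meson le_antisym order.refl strict_mono_less_eq)

lemma mono_block_index:
  assumes "strict_mono N"
  shows "mono (block_index N)"
  unfolding mono_def using block_index_le_iff[OF assms] by (meson order_trans order.refl)

lemma block_index_eq_Suc:
  assumes "strict_mono N" "N k \<le> j" "j < N (Suc k)"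
  shows "block_index N (Suc j) = Suc k"
  using assms block_index_le_iff[OF assms(1)] by (meson Suc_leI le_antisym not_less_eq_eq)

lemma sum_block_index_le:
  fixes w :: "nat \<Rightarrow> real"
  assumes N: "strict_mono N" and w: "\<And>k. 0 \<le> w k"
  shows "(\<Sum>j<N K. w (block_index N (Suc j))) \<le> (\<Sum>k\<le>K. real (N k) * w k)"
proof (induction K)
  case 0
  have "block_index N (Suc j) = 0" if "j < N 0" for j
    using that block_index_le_iff[OF N, of "Suc j" 0] by simp
  then show ?case by simp
next
  case (Suc K)
  have "N K \<le> N (Suc K)" using N by (simp add: strict_mono_less_eq)
  then have "(\<Sum>j<N (Suc K). w (block_index N (Suc j))) =
      (\<Sum>j<N K. w (block_index N (Suc j))) + (\<Sum>j\<in>{N K..<N (Suc K)}. w (block_index N (Suc j)))"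
    by (simp add: sum.atLeastLessThan_concat atLeast0LessThan[symmetric])
  also have "(\<Sum>j\<in>{N K..<N (Suc K)}. w (block_index N (Suc j))) = real (N (Suc K) - N K) * w (Suc K)"
    using block_index_eq_Suc[OF N, of K]
    by (subst sum.cong[OF refl, of _ _ "\<lambda>_. w (Suc K)"]) auto
  also have "\<dots> \<le> real (N (Suc K)) * w (Suc K)"
    using w by (intro mult_right_mono) auto
  finally show ?case using Suc.IH by simp
qed

lemma summable_block_step_series:
  fixes N :: "nat \<Rightarrow> nat" and \<epsilon> :: "nat \<Rightarrow> real"
  assumes N: "strict_mono N" "0 < N 0"
    and \<epsilon>: "\<And>k. 0 \<le> \<epsilon> k" "summable \<epsilon>" and n: "1 \<le> n"
  shows "summable (\<lambda>j. real (Suc j) ^ (n - 1) *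
      (\<epsilon> (block_index N (Suc j)) / real (N (block_index N (Suc j))) ^ n))"
    (is "summable ?a")
proof (rule bounded_imp_summable)
  let ?b = "block_index N"
  define w where "w k = \<epsilon> k / real (N k)" for k
  have N_pos: "0 < N k" for k
    using N strict_mono_less_eq[of N 0 k] by simp
  have a_le: "?a j \<le> w (?b (Suc j))" for j
  proof -
    have "?a j \<le> real (N (?b (Suc j))) ^ (n - 1) * (\<epsilon> (?b (Suc j)) / real (N (?b (Suc j))) ^ n)"
      using block_index_le_iff[OF N(1), of "Suc j" "?b (Suc j)"] \<epsilon>(1)
      by (intro mult_right_mono power_mono) auto
    also have "\<dots> = w (?b (Suc j))"
      using n N_pos[of "?b (Suc j)"] unfolding w_def by (cases n) (auto simp: field_simps)
    finally show ?thesis .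
  qed
  show "0 \<le> ?a j" for j
    using \<epsilon>(1) by simp
  fix T
  have "(\<Sum>j\<le>T. ?a j) \<le> (\<Sum>j\<le>T. w (?b (Suc j)))"
    by (rule sum_mono) (rule a_le)
  also have "\<dots> \<le> (\<Sum>j<N (Suc T). w (?b (Suc j)))"
  proof (rule sum_mono2)
    show "{..T} \<subseteq> {..<N (Suc T)}"
      using strict_mono_imp_increasing[OF N(1), of "Suc T"] by auto
    show "0 \<le> w (?b (Suc j))" for j
      unfolding w_def using \<epsilon>(1) by simp
  qed simp
  also have "\<dots> \<le> (\<Sum>k\<le>Suc T. \<epsilon> k)"
    using sum_block_index_le[OF N(1), of w "Suc T"] N_pos \<epsilon>(1)
    by (simp add: w_def del: sum.atMost_Suc)
  also have "\<dots> \<le> suminf \<epsilon>"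
    using \<epsilon> by (intro sum_le_suminf) auto
  finally show "(\<Sum>j\<le>T. ?a j) \<le> suminf \<epsilon>" .
qed

lemma C_class_interpolate:
  fixes N :: "nat \<Rightarrow> nat" and \<epsilon> :: "nat \<Rightarrow> real"
  assumes N: "strict_mono N" "0 < N 0"
    and \<epsilon>: "antimono \<epsilon>" "\<And>k. 0 \<le> \<epsilon> k" "summable \<epsilon>"
    and mn: "1 \<le> m" "1 \<le> n"
  obtains \<psi> where "\<psi> \<in> C_class m n" "\<And>k. real (N k) ^ n * \<psi> (N k) ^ m = \<epsilon> k"
proof
  define c where "c k = \<epsilon> k / real (N k) ^ n" for k
  define \<psi> where "\<psi> t = root m (c (block_index N t))" for t
  have N_pos: "0 < N k" for k
    using N strict_mono_less_eq[of N 0 k] by simp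
  have c_nonneg: "0 \<le> c k" for k
    unfolding c_def using \<epsilon>(2) by simp
  have \<psi>_pow: "\<psi> t ^ m = c (block_index N t)" for t
    unfolding \<psi>_def using mn c_nonneg by (simp add: real_root_pow_pos2)
  show "real (N k) ^ n * \<psi> (N k) ^ m = \<epsilon> k" for k
    using N_pos[of k] by (simp add: \<psi>_pow block_index_N[OF N(1)] c_def)
  have "c k \<le> c j" if "j \<le> k" for j k
  proof -
    have "real (N j) ^ n \<le> real (N k) ^ n"
      using that N(1) by (simp add: power_mono strict_mono_less_eq)
    moreover have "\<epsilon> k \<le> \<epsilon> j"
      using that \<epsilon>(1) by (simp add: antimono_def)
    ultimately show ?thesis
      unfolding c_def using \<epsilon>(2)[of k] N_pos[of j] by (intro frac_le) auto
  qed
  then have "antimono \<psi>"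
    using mono_block_index[OF N(1)] mn unfolding \<psi>_def antimono_def mono_def
    by (simp add: real_root_le_mono)
  moreover have "0 \<le> \<psi> t" for t
    unfolding \<psi>_def using c_nonneg by (simp add: real_root_ge_zero)
  moreover have "summable (\<lambda>j. real (Suc j) ^ (n - 1) * \<psi> (Suc j) ^ m)"
    unfolding \<psi>_pow c_def using summable_block_step_series[OF N \<epsilon>(2,3) mn(2)] .
  ultimately show "\<psi> \<in> C_class m n"
    unfolding C_class_def antimono_def by auto
qed

lemma filterlim_supnorm_int_cofinite:
  "filterlim supnorm_int at_top (cofinite :: (int ^ 'n::finite) filter)"
  unfolding filterlim_at_top eventually_cofinite
  by (metis (mono_tags) finite_supnorm_int_le finite_subset mem_Collect_eq nat_le_linear subsetI)

lemma infinite_imp_supnorm_int_gt: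
  fixes S :: "(int ^ 'n::finite) set"
  assumes "infinite S"
  shows "\<exists>q\<in>S. N < supnorm_int q"
  using assms finite_supnorm_int_le[of N] finite_subset
  by (metis (mono_tags) mem_Collect_eq not_le subsetI)

lemma obtain_strict_mono_supnorm_int_seq:
  fixes P :: "nat \<Rightarrow> int ^ 'n::finite \<Rightarrow> bool"
  assumes "\<And>k. infinite {q. P k q}"
  obtains qs where "strict_mono (supnorm_int \<circ> qs)" "0 < supnorm_int (qs 0)" "\<And>k. P k (qs k)"
proof -
  have "\<exists>qs. \<forall>k. (P k (qs k) \<and> 0 < supnorm_int (qs k)) \<and>
      supnorm_int (qs k) < supnorm_int (qs (Suc k))"
  proof (rule dependent_nat_choice)
    show "\<exists>q. P 0 q \<and> 0 < supnorm_int q"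
      using infinite_imp_supnorm_int_gt[OF assms, of 0 0] by auto
    show "\<exists>q'. (P (Suc k) q' \<and> 0 < supnorm_int q') \<and> supnorm_int q < supnorm_int q'" for q k
      using infinite_imp_supnorm_int_gt[OF assms, of "Suc k" "supnorm_int q"] by auto
  qed
  then show thesis using that by (auto simp: strict_mono_Suc_iff)
qed

lemma C_A_member_imp_not_Bad:
  fixes A :: "real ^ 'n::finite ^ 'm::finite" and \<gamma> :: "real ^ 'm"
  assumes "\<psi> \<in> C_A A \<gamma>"
  shows "(A, \<gamma>) \<notin> Bad"
proof
  define d where "d q = dist_Zm (matvec_int A q - \<gamma>)" for q :: "int ^ 'n"
  define g where "g t = real t ^ CARD('n) * \<psi> t ^ CARD('m)" for t
  assume "(A, \<gamma>) \<in> Bad"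
  then obtain e where "e > 0"
    and finite_good: "finite {q. real (supnorm_int q) ^ CARD('n) * d q ^ CARD('m) < e}"
    unfolding Bad_iff_finite d_def by blast
  have \<psi>: "antimono \<psi>" "\<And>t. 0 \<le> \<psi> t"
      "summable (\<lambda>k. real (Suc k) ^ (CARD('n) - 1) * \<psi> (Suc k) ^ CARD('m))"
    and hits: "infinite {q. d q < \<psi> (supnorm_int q)}"
    using assms unfolding C_A_def C_class_def antimono_def d_def by auto
  have "antimono (\<lambda>t. \<psi> t ^ CARD('m))"
    using \<psi>(1,2) by (simp add: antimono_def power_mono)
  then have "g \<longlonglongrightarrow> 0"
    unfolding g_def using \<psi>(2,3)
    by (intro summable_antimono_imp_power_mult_tendsto_zero) (auto simp: Suc_le_eq)
  then have "eventually (\<lambda>q. g (supnorm_int q) < e) cofinite"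
    using filterlim_supnorm_int_cofinite \<open>e > 0\<close>
    by (intro order_tendstoD(2)[OF filterlim_compose])
  then have finite_large: "finite {q. \<not> g (supnorm_int q) < e}"
    by (simp add: eventually_cofinite)
  have "{q. d q < \<psi> (supnorm_int q)} \<subseteq>
      {q. real (supnorm_int q) ^ CARD('n) * d q ^ CARD('m) < e} \<union> {q. \<not> g (supnorm_int q) < e}"
    (is "_ \<subseteq> ?small \<union> ?large")
  proof (intro subsetI)
    fix q assume "q \<in> {q. d q < \<psi> (supnorm_int q)}"
    then have "real (supnorm_int q) ^ CARD('n) * d q ^ CARD('m) \<le> g (supnorm_int q)"
      unfolding g_def d_def using dist_Zm_nonneg by (intro mult_left_mono power_mono) auto
    then show "q \<in> ?small \<union> ?large" by auto
  qed
  then show False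
    using hits finite_good finite_large finite_subset by blast
qed

lemma not_Bad_imp_C_A_nonempty:
  fixes A :: "real ^ 'n::finite ^ 'm::finite" and \<gamma> :: "real ^ 'm"
  assumes "(A, \<gamma>) \<notin> Bad"
  shows "C_A A \<gamma> \<noteq> {}"
proof -
  define d where "d q = dist_Zm (matvec_int A q - \<gamma>)" for q :: "int ^ 'n"
  have "\<forall>e>0. infinite {q. real (supnorm_int q) ^ CARD('n) * d q ^ CARD('m) < e}"
    using assms unfolding Bad_iff_finite d_def by blast
  then have "infinite {q. real (supnorm_int q) ^ CARD('n) * d q ^ CARD('m) < (1/2) ^ k}" for k
    by simp
  then obtain qs where qs: "strict_mono (supnorm_int \<circ> qs)" "0 < supnorm_int (qs 0)"
    "\<And>k. real (supnorm_int (qs k)) ^ CARD('n) * d (qs k) ^ CARD('m) < (1/2) ^ k"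
    using obtain_strict_mono_supnorm_int_seq[where
        P = "\<lambda>k q. real (supnorm_int q) ^ CARD('n) * d q ^ CARD('m) < (1/2) ^ k"] by blast
  define N where "N = supnorm_int \<circ> qs"
  have N: "strict_mono N" "0 < N 0" using qs(1,2) unfolding N_def by simp_all
  have half: "antimono (\<lambda>k. (1/2::real) ^ k)" "\<And>k. 0 \<le> (1/2::real) ^ k"
      "summable (\<lambda>k. (1/2::real) ^ k)"
    by (simp_all add: antimono_def power_decreasing summable_geometric)
  have card: "1 \<le> CARD('m)" "1 \<le> CARD('n)"
    by (simp_all add: Suc_le_eq)
  obtain \<psi> where \<psi>: "\<psi> \<in> C_class CARD('m) CARD('n)"
    "\<And>k. real (N k) ^ CARD('n) * \<psi> (N k) ^ CARD('m) = (1/2) ^ k"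
    using C_class_interpolate[OF N half card] by blast
  have \<psi>_nonneg: "0 \<le> \<psi> t" for t
    using \<psi>(1) unfolding C_class_def by auto
  have hit: "d (qs k) < \<psi> (N k)" for k
  proof -
    have "0 < N k"
      using N strict_mono_less_eq[of "N" 0 k] by simp
    moreover have "real (N k) ^ CARD('n) * d (qs k) ^ CARD('m) <
        real (N k) ^ CARD('n) * \<psi> (N k) ^ CARD('m)"
      using qs(3)[of k] \<psi>(2)[of k] by (simp add: N_def)
    ultimately have "d (qs k) ^ CARD('m) < \<psi> (N k) ^ CARD('m)"
      by (simp add: mult_less_cancel_left_pos)
    then show ?thesis using \<psi>_nonneg by (rule power_less_imp_less_base)
  qed
  have "infinite (range qs)"
    using qs(1) by (intro range_inj_infinite inj_on_imageI2[of supnorm_int] strict_mono_imp_inj_on)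
  moreover have "range qs \<subseteq> {q. d q < \<psi> (supnorm_int q)}"
    using hit unfolding N_def by auto
  ultimately have "\<psi> \<in> C_A A \<gamma>"
    using \<psi>(1) infinite_super unfolding C_A_def d_def by blast
  then show ?thesis by blast
qed

theorem corollary1p3:
  fixes A :: "real ^ 'n::finite ^ 'm::finite" and \<gamma> :: "real ^ 'm"
  assumes "\<forall>i j. A $ i $ j \<in> {0..<1}"
    and "\<forall>i. \<gamma> $ i \<in> {0..<1}"
  shows "C_A A \<gamma> \<noteq> {} \<longleftrightarrow> (A, \<gamma>) \<notin> Bad"
  using C_A_member_imp_not_Bad not_Bad_imp_C_A_nonempty by blast

end
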